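(* Let $\Omega_c=\bigcup_{j\in\mathbb N}[a_j,b_j]$ with $(a_j)$ unbounded and $0=a_1<b_1\le a_2<b_2\le\cdots$, let $(k_j)_{j\in\mathbb N}\subset\mathbb R_{>0}$ be bounded, $k_B=\sum_jk_j\chi_{[a_j,b_j]}$, and for $L>0$ let $$\mathcal T^\varphi_{\Omega_L}(t)x^0=\exp\Big(-\frac1c\int_{\cdot-ct}^{\cdot}P_{\Omega_L}(k_B|_{[0,L]})(y)\,dy\Big)P_{\Omega_L}(x^0)(\cdot-ct),\qquad x^0\in L^2(\Omega_L),\ t\ge0,$$ be the closed-loop semigroup on $L^2(\Omega_L)$. The following are equivalent: (i) There exist $\tilde M,\tilde k>0$ with $\|\mathcal T^\varphi_{\Omega_L}(t)\|_{L(L^2(\Omega_L))}\le\tilde Me^{-\tilde kt}$ for all $L>0$ and $t\ge0$. (ii) There exist $M,k>0$ such that for all $n,m\in\mathbb N$ with $n\ge m$: $k(a_n-b_m)-\sum_{j=m+1}^{n-1}k_j(b_j-a_j)\le M$.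
   Context: $c>0$ constant, $\Omega_L=[0,L]$. $P_{\Omega_L}(f)$ denotes the $L$-periodic extension to $\mathbb R$ of a function $f$ on $[0,L]$ ($P_{\Omega_L}(f)(\omega)=f(\omega-jL)$ for $\omega\in(jL,(j+1)L]$, $j\in\mathbb Z$). $\mathcal T^\varphi_{\Omega_L}$ is the semigroup of the transport equation $\partial_tx=-k_Bx-c\partial_\omega x$ on $[0,L]$ with periodic boundary condition $x(0,t)=x(L,t)$. *)

theory Defs
  imports "HOL-Analysis.Analysis"
begin

definition kB :: "(nat \<Rightarrow> real) \<Rightarrow> (nat \<Rightarrow> real) \<Rightarrow> (nat \<Rightarrow> real) \<Rightarrow> real \<Rightarrow> real" where
  "kB a b kk \<omega> = (\<Sum>j. kk (Suc j) * indicator {a (Suc j)..b (Suc j)} \<omega>)"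

text \<open>L-periodic extension: P f w = f (w - jL) for w in (jL,(j+1)L].\<close>
definition per_ext :: "real \<Rightarrow> (real \<Rightarrow> real) \<Rightarrow> real \<Rightarrow> real" where
  "per_ext L f \<omega> = f (\<omega> - real_of_int (\<lceil>\<omega> / L\<rceil> - 1) * L)"

definition Tsg :: "real \<Rightarrow> (real \<Rightarrow> real) \<Rightarrow> real \<Rightarrow> real \<Rightarrow> (real \<Rightarrow> real) \<Rightarrow> real \<Rightarrow> real" where
  "Tsg c k L t x0 \<omega> =
     exp (- (1 / c) * integral {\<omega> - c * t..\<omega>} (per_ext L (\<lambda>y. if y \<in> {0..L} then k y else 0)))
     * per_ext L x0 (\<omega> - c * t)"

definition L2_on :: "real \<Rightarrow> (real \<Rightarrow> real) set" where
  "L2_on L = {x. x \<in> borel_measurable (lebesgue_on {0..L}) \<and>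
                 integrable (lebesgue_on {0..L}) (\<lambda>\<omega>. (x \<omega>)\<^sup>2)}"

definition L2_norm_on :: "real \<Rightarrow> (real \<Rightarrow> real) \<Rightarrow> real" where
  "L2_norm_on L x = sqrt (LINT \<omega>|lebesgue_on {0..L}. (x \<omega>)\<^sup>2)"

end

theory Submission
  imports Defs
begin

text \<open>Along characteristics the semigroup multiplies the transported initial value by
  exp (-(1/c) \<integral> K) over a window of length c t, where K is the L-periodic extension of k_B.
  Uniform exponential stability therefore amounts to a lower bound \<kappa> (v - u) - C for the
  integrals of K over all windows [u, v], uniformly in L. Condition (ii) gives such a bound for
  k_B on [0, \<infinity>): a window is cut at an endpoint b m and a start point a n, the middle part is
  controlled by (ii) itself, and the end pieces lie in a single interval or gap, where (ii) for
  neighbouring indices applies. The bound passes to the periodic extensions at the cost of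
  doubling C. Conversely, on a period longer than a n the indicator of [b m - \<delta>, b m] is
  transported to [a n - \<delta>, a n] without wrapping around; comparing its damping with the
  stability estimate gives (ii), with the decay rate as \<kappa>.\<close>

definition overlap :: "real \<Rightarrow> real \<Rightarrow> real \<Rightarrow> real \<Rightarrow> real" where
  "overlap x y s t = max 0 (min y t - max x s)"

lemma has_integral_indicator_overlap: "(indicat_real {x..y} has_integral overlap x y s t) {s..t}"
proof -
  have "((\<lambda>_. 1::real) has_integral overlap x y s t) ({x..y} \<inter> {s..t})"
    using has_integral_const_real[of "1::real" "max x s" "min y t"]
    by (auto simp: overlap_def content_real_if max_def)
  then have "((\<lambda>z. if z \<in> {x..y} then 1::real else 0) has_integral overlap x y s t) {s..t}"
    by (simp only: has_integral_restrict_Int)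
  moreover have "indicat_real {x..y} = (\<lambda>z. if z \<in> {x..y} then 1 else 0)"
    by (auto simp: indicator_def)
  ultimately show ?thesis
    by simp
qed

section \<open>Periodic extensions\<close>

lemma reduce_mod_period:
  fixes L u :: real
  assumes "0 < L"
  obtains p :: int where "0 \<le> u - of_int p * L" "u - of_int p * L < L"
proof
  show "0 \<le> u - of_int \<lfloor>u / L\<rfloor> * L" "u - of_int \<lfloor>u / L\<rfloor> * L < L"
    using floor_divide_lower[OF assms, of u] floor_divide_upper[OF assms, of u]
    by (simp_all add: algebra_simps)
qed

lemma per_ext_periodic:
  assumes "0 < L"
  shows "per_ext L f (x + of_int p * L) = per_ext L f x"
proof -
  have "(x + of_int p * L) / L = x / L + of_int p"
    using assms by (simp add: field_simps)
  then have "\<lceil>(x + of_int p * L) / L\<rceil> = \<lceil>x / L\<rceil> + p"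
    by simp
  then show ?thesis
    unfolding per_ext_def by (simp add: algebra_simps)
qed

lemma per_ext_argument_bounds:
  assumes "0 < L"
  shows "0 < x - of_int (\<lceil>x / L\<rceil> - 1) * L" "x - of_int (\<lceil>x / L\<rceil> - 1) * L \<le> L"
  using ceiling_divide_lower[OF assms, of x] ceiling_divide_upper[OF assms, of x]
  by (simp_all add: algebra_simps)

lemma per_ext_eq:
  assumes "0 < L" "0 < x" "x \<le> L"
  shows "per_ext L f x = f x"
proof -
  have "\<lceil>x / L\<rceil> = 1"
    using assms by (simp add: ceiling_eq_iff field_simps)
  then show ?thesis
    unfolding per_ext_def by simp
qed

lemma per_ext_cong:
  assumes "0 < L" "\<And>y. 0 < y \<Longrightarrow> y \<le> L \<Longrightarrow> f y = g y"
  shows "per_ext L f = per_ext L g"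
  unfolding per_ext_def using assms per_ext_argument_bounds[OF assms(1)] by auto

locale integrable_periodic =
  fixes L :: real and K :: "real \<Rightarrow> real"
  assumes period_pos: "0 < L"
    and periodic: "\<And>x p. K (x + of_int p * L) = K x"
    and integrable_period: "K integrable_on {0..L}"
begin

lemma integral_shift_periods: "integral {x + of_int p * L..y + of_int p * L} K = integral {x..y} K"
  using integral_shift_real_ivl[of "x + of_int p * L" "of_int p * L" "y + of_int p * L" K]
  by (simp add: periodic)

lemma integrable_shift_periods:
  assumes "K integrable_on {x..y}"
  shows "K integrable_on {x + of_int p * L..y + of_int p * L}"
  using integrable_shift_real_ivl[OF assms, of "- of_int p * L"] periodic[of _ "- p"] by simp

lemma integrable_multiple_periods: "K integrable_on {0..real n * L}"
proof (induction n)
  case (Suc n)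
  have "K integrable_on {0 + of_int (int n) * L..L + of_int (int n) * L}"
    by (rule integrable_shift_periods[OF integrable_period])
  then have "K integrable_on {real n * L..real (Suc n) * L}"
    by (simp add: algebra_simps)
  then show ?case
    using Henstock_Kurzweil_Integration.integrable_combine[OF _ _ Suc.IH] period_pos by simp
qed (use integrable_on_refl[of K "0::real"] in simp)

lemma integrable: "K integrable_on {x..y}"
proof -
  obtain p where p: "0 \<le> x - of_int p * L" "x - of_int p * L < L"
    using reduce_mod_period[OF period_pos] .
  define n where "n = nat \<lceil>(y - of_int p * L) / L\<rceil>"
  have "(y - of_int p * L) / L \<le> real n"
    unfolding n_def by linarith
  then have "y - of_int p * L \<le> real n * L"
    using period_pos by (simp add: field_simps)
  then have "K integrable_on {x - of_int p * L..y - of_int p * L}"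
    using p by (intro integrable_subinterval_real[OF integrable_multiple_periods[of n]]) auto
  then show ?thesis
    using integrable_shift_periods[of "x - of_int p * L" "y - of_int p * L" p] by simp
qed

lemma integral_adjacent:
  "x \<le> y \<Longrightarrow> y \<le> z \<Longrightarrow> integral {x..y} K + integral {y..z} K = integral {x..z} K"
  by (intro Henstock_Kurzweil_Integration.integral_combine integrable)

lemma integral_period_window: "integral {u..u + L} K = integral {0..L} K"
proof -
  obtain p where p: "0 \<le> u - of_int p * L" "u - of_int p * L < L"
    using reduce_mod_period[OF period_pos] .
  define u' where "u' = u - of_int p * L"
  have "integral {u..u + L} K = integral {u'..u' + L} K"
    using integral_shift_periods[of u' p "u' + L"] unfolding u'_def by simp
  also have "\<dots> = integral {u'..L} K + integral {L..u' + L} K"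
    using p unfolding u'_def by (intro integral_adjacent[symmetric]) auto
  also have "integral {L..u' + L} K = integral {0..u'} K"
    using integral_shift_periods[of 0 1 u'] by (simp add: add.commute)
  also have "integral {u'..L} K + integral {0..u'} K = integral {0..L} K"
    using p integral_adjacent[of 0 u' L] unfolding u'_def by simp
  finally show ?thesis .
qed

lemma integral_multiple_periods: "integral {u..u + real q * L} K = real q * integral {0..L} K"
proof (induction q)
  case (Suc q)
  have "integral {u..u + real q * L} K + integral {u + real q * L..u + real q * L + L} K
      = integral {u..u + real q * L + L} K"
    using period_pos by (intro integral_adjacent) auto
  moreover have "u + real q * L + L = u + real (Suc q) * L"
    by (simp add: algebra_simps)
  ultimately show ?case
    using Suc.IH integral_period_window[of "u + real q * L"] by (simp add: algebra_simps)
qed simp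

lemma integral_translate:
  "(\<lambda>\<omega>. K (\<omega> - r)) integrable_on {0..L}" "integral {0..L} (\<lambda>\<omega>. K (\<omega> - r)) = integral {0..L} K"
proof -
  show "(\<lambda>\<omega>. K (\<omega> - r)) integrable_on {0..L}"
    using integrable_shift_real_ivl[OF integrable[of "- r" "L - r"], of "- r"] by simp
  have "integral {0..L} (\<lambda>\<omega>. K (\<omega> - r)) = integral {- r..- r + L} K"
    using integral_shift_real_ivl[of "- r" "- r" "L - r" K] by simp
  then show "integral {0..L} (\<lambda>\<omega>. K (\<omega> - r)) = integral {0..L} K"
    using integral_period_window[of "- r"] by simp
qed

context
  fixes \<kappa> C :: real
  assumes integral_sub_period: "\<And>s t. 0 \<le> s \<Longrightarrow> s \<le> t \<Longrightarrow> t \<le> L \<Longrightarrow> \<kappa> * (t - s) - C \<le> integral {s..t} K"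
    and integral_period: "\<kappa> * L \<le> integral {0..L} K"
    and C_nonneg: "0 \<le> C"
begin

text \<open>A window shorter than a period meets at most two periods, hence the constant 2 C.\<close>

lemma integral_short_window_lower:
  assumes "0 \<le> \<rho>" "\<rho> \<le> L"
  shows "\<kappa> * \<rho> - 2 * C \<le> integral {u..u + \<rho>} K"
proof -
  obtain p where p: "0 \<le> u - of_int p * L" "u - of_int p * L < L"
    using reduce_mod_period[OF period_pos] .
  define u' where "u' = u - of_int p * L"
  have shift: "integral {u..u + \<rho>} K = integral {u'..u' + \<rho>} K"
    using integral_shift_periods[of u' p "u' + \<rho>"] unfolding u'_def by simp
  show ?thesis
  proof (cases "u' + \<rho> \<le> L")
    case True
    then show ?thesis
      using shift integral_sub_period[of u' "u' + \<rho>"] p assms C_nonneg unfolding u'_def by simp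
  next
    case False
    have "integral {u'..u' + \<rho>} K = integral {u'..L} K + integral {L..u' + \<rho>} K"
      using False p unfolding u'_def by (intro integral_adjacent[symmetric]) auto
    also have "integral {L..u' + \<rho>} K = integral {0..u' + \<rho> - L} K"
      using integral_shift_periods[of 0 1 "u' + \<rho> - L"] by simp
    finally show ?thesis
      using shift integral_sub_period[of u' L] integral_sub_period[of 0 "u' + \<rho> - L"] False p assms
      unfolding u'_def by (simp add: algebra_simps)
  qed
qed

lemma integral_window_lower:
  assumes "u \<le> v"
  shows "\<kappa> * (v - u) - 2 * C \<le> integral {u..v} K"
proof -
  define q where "q = nat \<lfloor>(v - u) / L\<rfloor>"
  define \<rho> where "\<rho> = v - u - real q * L"
  have "real q = of_int \<lfloor>(v - u) / L\<rfloor>"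
    unfolding q_def using assms period_pos by simp
  then have \<rho>: "0 \<le> \<rho>" "\<rho> \<le> L"
    using floor_divide_lower[OF period_pos, of "v - u"]
      floor_divide_upper[OF period_pos, of "v - u"]
    unfolding \<rho>_def by (simp_all add: algebra_simps)
  have "0 \<le> real q * L"
    using period_pos by simp
  then have "integral {u..v} K = integral {u..u + real q * L} K + integral {u + real q * L..v} K"
    using \<rho> unfolding \<rho>_def by (intro integral_adjacent[symmetric]) auto
  moreover have "\<kappa> * \<rho> - 2 * C \<le> integral {u + real q * L..v} K"
    using integral_short_window_lower[OF \<rho>, of "u + real q * L"] unfolding \<rho>_def by simp
  moreover have "real q * (\<kappa> * L) \<le> integral {u..u + real q * L} K"
    using integral_multiple_periods[of u q] integral_period by (simp add: mult_left_mono)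
  ultimately show ?thesis
    unfolding \<rho>_def by (simp add: algebra_simps)
qed

end

end

lemma integrable_periodic_per_ext:
  assumes "0 < L" "f integrable_on {0..L}"
  shows "integrable_periodic L (per_ext L f)"
proof
  show "per_ext L f integrable_on {0..L}"
    using assms
    by (intro integrable_spike[OF assms(2) negligible_sing[of 0]]) (auto simp: per_ext_eq)
qed (use assms per_ext_periodic in auto)

lemma integral_per_ext:
  assumes "0 < L" "0 \<le> s" "t \<le> L"
  shows "integral {s..t} (per_ext L f) = integral {s..t} f"
  using assms by (intro integral_spike[OF negligible_sing[of 0]]) (auto simp: per_ext_eq)

section \<open>Square-integrable functions on a period\<close>

lemma nonneg_integrable_on_lebesgue_on:
  fixes h :: "real \<Rightarrow> real"
  assumes "h integrable_on {s..t}" "\<And>x. x \<in> {s..t} \<Longrightarrow> 0 \<le> h x"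
  shows "integrable (lebesgue_on {s..t}) h" "integral\<^sup>L (lebesgue_on {s..t}) h = integral {s..t} h"
proof -
  show "integrable (lebesgue_on {s..t}) h"
    using assms
    by (intro absolutely_integrable_imp_integrable nonnegative_absolutely_integrable_1) auto
  then show "integral\<^sup>L (lebesgue_on {s..t}) h = integral {s..t} h"
    by (simp add: lebesgue_integral_eq_integral)
qed

lemma measurable_translate_lebesgue:
  assumes "f \<in> borel_measurable lebesgue"
  shows "(\<lambda>x. f (x + c)) \<in> borel_measurable (lebesgue :: real measure)"
proof -
  have "(\<lambda>x::real. x + c) \<in> lebesgue \<rightarrow>\<^sub>M lebesgue"
    using lebesgue_affine_measurable[of "\<lambda>_. 1::real" c] by (simp add: add.commute)
  then show ?thesis
    using measurable_comp[OF _ assms] by (simp add: o_def)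
qed

lemma per_ext_translate_eq:
  assumes "0 < L" "0 \<le> r" "r < L" "0 \<le> \<omega>" "\<omega> \<le> L"
  shows "per_ext L f (\<omega> - r) = (if \<omega> \<le> r then f (\<omega> + (L - r)) else f (\<omega> - r))"
proof (cases "\<omega> \<le> r")
  case True
  have "per_ext L f (\<omega> - r) = per_ext L f ((\<omega> + (L - r)) + of_int (- 1) * L)"
    by (simp add: algebra_simps)
  also have "\<dots> = per_ext L f (\<omega> + (L - r))"
    using assms(1) by (rule per_ext_periodic)
  also have "\<dots> = f (\<omega> + (L - r))"
    using assms True by (intro per_ext_eq) auto
  finally show ?thesis
    using True by simp
qed (use assms in \<open>simp add: per_ext_eq\<close>)

lemma measurable_per_ext_translate:
  assumes "0 < L" and x0: "x0 \<in> borel_measurable (lebesgue_on {0..L})"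
  shows "(\<lambda>\<omega>. per_ext L x0 (\<omega> - r)) \<in> borel_measurable (lebesgue_on {0..L})"
proof -
  obtain p where p: "0 \<le> r - of_int p * L" "r - of_int p * L < L"
    using reduce_mod_period[OF assms(1)] .
  define r' where "r' = r - of_int p * L"
  have r': "0 \<le> r'" "r' < L"
    using p unfolding r'_def by simp_all
  define x0' where "x0' y = (if y \<in> {0..L} then x0 y else 0)" for y
  define G where "G \<omega> = (if \<omega> \<in> {..r'} then x0' (\<omega> + (L - r')) else x0' (\<omega> + - r'))" for \<omega>
  have "x0' \<in> borel_measurable lebesgue"
    unfolding x0'_def using x0 by (subst borel_measurable_if) auto
  then have "G \<in> borel_measurable lebesgue"
    unfolding G_def by (intro measurable_If_set measurable_translate_lebesgue) auto
  then have "G \<in> borel_measurable (lebesgue_on {0..L})"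
    by (rule measurable_restrict_space1)
  moreover have "per_ext L x0 (\<omega> - r) = G \<omega>" if "\<omega> \<in> {0..L}" for \<omega>
  proof -
    have "per_ext L x0 (\<omega> - r) = per_ext L x0 ((\<omega> - r') + of_int (- p) * L)"
      unfolding r'_def by (simp add: algebra_simps)
    also have "\<dots> = per_ext L x0 (\<omega> - r')"
      using assms(1) by (rule per_ext_periodic)
    also have "\<dots> = G \<omega>"
      using that r' assms(1) unfolding G_def x0'_def by (auto simp: per_ext_translate_eq)
    finally show ?thesis .
  qed
  ultimately show ?thesis
    by (subst measurable_lebesgue_cong[where g = G]) auto
qed

lemma L2_on_per_ext_translate:
  assumes "0 < L" and x0: "x0 \<in> L2_on L"
  shows "(\<lambda>\<omega>. per_ext L x0 (\<omega> - r)) \<in> L2_on L"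
    and "L2_norm_on L (\<lambda>\<omega>. per_ext L x0 (\<omega> - r)) = L2_norm_on L x0"
proof -
  have sq: "integrable (lebesgue_on {0..L}) (\<lambda>\<omega>. (x0 \<omega>)\<^sup>2)"
    using x0 unfolding L2_on_def by simp
  then have sq_HK: "(\<lambda>\<omega>. (x0 \<omega>)\<^sup>2) integrable_on {0..L}"
    by (simp add: integrable_on_lebesgue_on)
  interpret P: integrable_periodic L "per_ext L (\<lambda>\<omega>. (x0 \<omega>)\<^sup>2)"
    using integrable_periodic_per_ext[OF assms(1) sq_HK] .
  have square: "(\<lambda>\<omega>. (per_ext L x0 (\<omega> - r))\<^sup>2) = (\<lambda>\<omega>. per_ext L (\<lambda>\<omega>. (x0 \<omega>)\<^sup>2) (\<omega> - r))"
    by (simp add: per_ext_def)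
  have "integrable (lebesgue_on {0..L}) (\<lambda>\<omega>. per_ext L (\<lambda>\<omega>. (x0 \<omega>)\<^sup>2) (\<omega> - r))"
    and "integral\<^sup>L (lebesgue_on {0..L}) (\<lambda>\<omega>. per_ext L (\<lambda>\<omega>. (x0 \<omega>)\<^sup>2) (\<omega> - r))
           = integral {0..L} (\<lambda>\<omega>. per_ext L (\<lambda>\<omega>. (x0 \<omega>)\<^sup>2) (\<omega> - r))"
    using nonneg_integrable_on_lebesgue_on[OF P.integral_translate(1)[of r]]
    by (auto simp: per_ext_def)
  moreover have "integral {0..L} (\<lambda>\<omega>. per_ext L (\<lambda>\<omega>. (x0 \<omega>)\<^sup>2) (\<omega> - r))
      = integral {0..L} (\<lambda>\<omega>. (x0 \<omega>)\<^sup>2)"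
    using P.integral_translate(2)[of r] integral_per_ext[OF assms(1), of 0 L] by simp
  ultimately have "integrable (lebesgue_on {0..L}) (\<lambda>\<omega>. (per_ext L x0 (\<omega> - r))\<^sup>2)"
    and "integral\<^sup>L (lebesgue_on {0..L}) (\<lambda>\<omega>. (per_ext L x0 (\<omega> - r))\<^sup>2)
           = integral {0..L} (\<lambda>\<omega>. (x0 \<omega>)\<^sup>2)"
    unfolding square by simp_all
  moreover have "(\<lambda>\<omega>. per_ext L x0 (\<omega> - r)) \<in> borel_measurable (lebesgue_on {0..L})"
    using x0 assms(1) unfolding L2_on_def by (intro measurable_per_ext_translate) auto
  ultimately show "(\<lambda>\<omega>. per_ext L x0 (\<omega> - r)) \<in> L2_on L"
    and "L2_norm_on L (\<lambda>\<omega>. per_ext L x0 (\<omega> - r)) = L2_norm_on L x0"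
    unfolding L2_on_def L2_norm_on_def using lebesgue_integral_eq_integral[OF sq] by simp_all
qed

lemma L2_on_mult_bounded:
  assumes E: "E \<in> borel_measurable (lebesgue_on {0..L})" and bound: "\<And>\<omega>. \<bar>E \<omega>\<bar> \<le> B"
    and g: "g \<in> L2_on L"
  shows "(\<lambda>\<omega>. E \<omega> * g \<omega>) \<in> L2_on L"
    and "L2_norm_on L (\<lambda>\<omega>. E \<omega> * g \<omega>) \<le> B * L2_norm_on L g"
proof -
  have g2: "integrable (lebesgue_on {0..L}) (\<lambda>\<omega>. (g \<omega>)\<^sup>2)"
    and gm: "g \<in> borel_measurable (lebesgue_on {0..L})"
    using g unfolding L2_on_def by auto
  have pointwise: "(E \<omega> * g \<omega>)\<^sup>2 \<le> B\<^sup>2 * (g \<omega>)\<^sup>2" for \<omega>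
  proof -
    have "\<bar>E \<omega>\<bar>\<^sup>2 \<le> B\<^sup>2"
      using bound[of \<omega>] by (intro power_mono) auto
    then show ?thesis
      by (simp add: power_mult_distrib mult_right_mono)
  qed
  have Em: "(\<lambda>\<omega>. E \<omega> * g \<omega>) \<in> borel_measurable (lebesgue_on {0..L})"
    using E gm by (rule borel_measurable_times)
  have int: "integrable (lebesgue_on {0..L}) (\<lambda>\<omega>. (E \<omega> * g \<omega>)\<^sup>2)"
  proof (rule Bochner_Integration.integrable_bound)
    show "integrable (lebesgue_on {0..L}) (\<lambda>\<omega>. B\<^sup>2 * (g \<omega>)\<^sup>2)"
      using g2 by simp
    show "(\<lambda>\<omega>. (E \<omega> * g \<omega>)\<^sup>2) \<in> borel_measurable (lebesgue_on {0..L})"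
      using Em by (rule borel_measurable_power)
    show "AE \<omega> in lebesgue_on {0..L}. norm ((E \<omega> * g \<omega>)\<^sup>2) \<le> norm (B\<^sup>2 * (g \<omega>)\<^sup>2)"
      using pointwise by (intro AE_I2) simp
  qed
  then show "(\<lambda>\<omega>. E \<omega> * g \<omega>) \<in> L2_on L"
    unfolding L2_on_def using Em by simp
  have "integral\<^sup>L (lebesgue_on {0..L}) (\<lambda>\<omega>. (E \<omega> * g \<omega>)\<^sup>2)
      \<le> integral\<^sup>L (lebesgue_on {0..L}) (\<lambda>\<omega>. B\<^sup>2 * (g \<omega>)\<^sup>2)"
    using int g2 pointwise by (intro integral_mono) auto
  then have "sqrt (integral\<^sup>L (lebesgue_on {0..L}) (\<lambda>\<omega>. (E \<omega> * g \<omega>)\<^sup>2))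
      \<le> sqrt (B\<^sup>2 * integral\<^sup>L (lebesgue_on {0..L}) (\<lambda>\<omega>. (g \<omega>)\<^sup>2))"
    by simp
  also have "\<dots> = B * L2_norm_on L g"
    using bound[of 0] unfolding L2_norm_on_def by (simp add: real_sqrt_mult)
  finally show "L2_norm_on L (\<lambda>\<omega>. E \<omega> * g \<omega>) \<le> B * L2_norm_on L g"
    unfolding L2_norm_on_def .
qed

lemma indicator_L2_on:
  assumes "0 \<le> \<alpha>" "\<alpha> \<le> \<beta>" "\<beta> \<le> L"
  shows "indicat_real {\<alpha>..\<beta>} \<in> L2_on L" "L2_norm_on L (indicat_real {\<alpha>..\<beta>}) = sqrt (\<beta> - \<alpha>)"
proof -
  have "(indicat_real {\<alpha>..\<beta>} has_integral (\<beta> - \<alpha>)) {0..L}"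
    using has_integral_indicator_overlap[of \<alpha> \<beta> 0 L] assms by (simp add: overlap_def)
  then have "integrable (lebesgue_on {0..L}) (indicat_real {\<alpha>..\<beta>})"
    and "integral\<^sup>L (lebesgue_on {0..L}) (indicat_real {\<alpha>..\<beta>}) = \<beta> - \<alpha>"
    using nonneg_integrable_on_lebesgue_on[of "indicat_real {\<alpha>..\<beta>}" 0 L]
    by (auto simp: integrable_on_def integral_unique)
  moreover have "(\<lambda>\<omega>. (indicat_real {\<alpha>..\<beta>} \<omega>)\<^sup>2) = indicat_real {\<alpha>..\<beta>}"
    by (auto simp: indicator_def)
  ultimately show "indicat_real {\<alpha>..\<beta>} \<in> L2_on L"
    and "L2_norm_on L (indicat_real {\<alpha>..\<beta>}) = sqrt (\<beta> - \<alpha>)"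
    unfolding L2_on_def L2_norm_on_def by (auto intro: borel_measurable_integrable)
qed

section \<open>Estimates for the transport semigroup\<close>

lemma Tsg_eq:
  assumes "0 < L"
  shows "Tsg c k L t x0 =
    (\<lambda>\<omega>. exp (- integral {\<omega> - c * t..\<omega>} (per_ext L k) / c) * per_ext L x0 (\<omega> - c * t))"
proof -
  have restrict: "per_ext L (\<lambda>y. if y \<in> {0..L} then k y else 0) = per_ext L k"
    using assms by (intro per_ext_cong) auto
  show ?thesis
    unfolding Tsg_def restrict by (simp add: fun_eq_iff)
qed

lemma continuous_on_integral_window:
  fixes K :: "real \<Rightarrow> real"
  assumes K: "\<And>x y. K integrable_on {x..y}" and "0 \<le> h"
  shows "continuous_on {u..v} (\<lambda>\<omega>. integral {\<omega> - h..\<omega>} K)"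
proof -
  define F where "F x = integral {u - h..x} K" for x
  have F: "continuous_on {u - h..v} F"
    unfolding F_def by (rule indefinite_integral_continuous_1[OF K])
  have "continuous_on {u..v} F"
    by (rule continuous_on_subset[OF F]) (use \<open>0 \<le> h\<close> in auto)
  moreover have "continuous_on {u..v} (\<lambda>\<omega>. F (\<omega> - h))"
    by (rule continuous_on_compose2[OF F]) (use \<open>0 \<le> h\<close> in \<open>auto intro: continuous_intros\<close>)
  ultimately have diff: "continuous_on {u..v} (\<lambda>\<omega>. F \<omega> - F (\<omega> - h))"
    by (rule continuous_on_diff)
  have "F \<omega> - F (\<omega> - h) = integral {\<omega> - h..\<omega>} K" if "\<omega> \<in> {u..v}" for \<omega>
    using Henstock_Kurzweil_Integration.integral_combine[OF _ _ K, of "u - h" "\<omega> - h" \<omega>]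
      that \<open>0 \<le> h\<close>
    unfolding F_def by simp
  then show ?thesis
    by (rule continuous_on_eq[OF diff])
qed

lemma Tsg_upper_bound:
  assumes "0 < c" "0 < L" "0 \<le> t" "x0 \<in> L2_on L" "k integrable_on {0..L}"
    and window: "\<And>u v. u \<le> v \<Longrightarrow> \<kappa> * (v - u) - D \<le> integral {u..v} (per_ext L k)"
  shows "Tsg c k L t x0 \<in> L2_on L"
    and "L2_norm_on L (Tsg c k L t x0) \<le> exp (D / c) * exp (- \<kappa> * t) * L2_norm_on L x0"
proof -
  interpret K: integrable_periodic L "per_ext L k"
    using integrable_periodic_per_ext assms by blast
  define E where "E \<omega> = exp (- integral {\<omega> - c * t..\<omega>} (per_ext L k) / c)" for \<omega>
  have "\<bar>E \<omega>\<bar> \<le> exp (D / c) * exp (- \<kappa> * t)" for \<omega>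
  proof -
    have "\<kappa> * (c * t) - D \<le> integral {\<omega> - c * t..\<omega>} (per_ext L k)"
      using window[of "\<omega> - c * t" \<omega>] assms by simp
    then have "- integral {\<omega> - c * t..\<omega>} (per_ext L k) / c \<le> D / c + - \<kappa> * t"
      using \<open>0 < c\<close> by (simp add: field_simps)
    then show ?thesis
      unfolding E_def by (simp add: exp_add[symmetric])
  qed
  moreover have "E \<in> borel_measurable (lebesgue_on {0..L})"
    unfolding E_def using assms
    by (intro continuous_imp_measurable_on_sets_lebesgue continuous_intros
        continuous_on_integral_window K.integrable) auto
  ultimately show "Tsg c k L t x0 \<in> L2_on L"
    and "L2_norm_on L (Tsg c k L t x0) \<le> exp (D / c) * exp (- \<kappa> * t) * L2_norm_on L x0"
    using L2_on_mult_bounded[of E L _ "\<lambda>\<omega>. per_ext L x0 (\<omega> - c * t)"]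
      L2_on_per_ext_translate[OF \<open>0 < L\<close> \<open>x0 \<in> L2_on L\<close>, of "c * t"]
    unfolding Tsg_eq[OF \<open>0 < L\<close>] E_def[symmetric] by auto
qed

lemma Tsg_indicator_lower_bound:
  assumes "0 < c" "0 \<le> t" "0 < \<alpha>" "\<alpha> \<le> \<beta>" "\<beta> + c * t \<le> L"
    and k_nonneg: "\<And>x. 0 \<le> k x" and k: "k integrable_on {0..L}"
  shows "sqrt (\<beta> - \<alpha>) * exp (- integral {\<alpha>..\<beta> + c * t} k / c)
           \<le> L2_norm_on L (Tsg c k L t (indicator {\<alpha>..\<beta>}))"
proof -
  have "0 \<le> c * t"
    using assms by simp
  then have "\<beta> \<le> L" "0 < L"
    using assms by linarith+
  interpret K: integrable_periodic L "per_ext L k"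
    using integrable_periodic_per_ext \<open>0 < L\<close> k by blast
  have K_nonneg: "0 \<le> per_ext L k x" for x
    unfolding per_ext_def using k_nonneg .
  define T where "T = Tsg c k L t (indicator {\<alpha>..\<beta>})"
  define e where "e = exp (- integral {\<alpha>..\<beta> + c * t} k / c)"
  have "indicat_real {\<alpha>..\<beta>} \<in> L2_on L"
    using indicator_L2_on \<open>\<beta> \<le> L\<close> assms by simp
  then have "T \<in> L2_on L" \<comment> \<open>the multiplier is at most 1 because k is nonnegative\<close>
    unfolding T_def using Tsg_upper_bound(1)[of c L t _ k 0 0] assms \<open>0 < L\<close> K_nonneg
    by (auto intro: integral_nonneg K.integrable)
  then have T2: "(\<lambda>\<omega>. (T \<omega>)\<^sup>2) integrable_on {0..L}"
    "integral {0..L} (\<lambda>\<omega>. (T \<omega>)\<^sup>2) = integral\<^sup>L (lebesgue_on {0..L}) (\<lambda>\<omega>. (T \<omega>)\<^sup>2)"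
    unfolding L2_on_def by (auto simp: integrable_on_lebesgue_on lebesgue_integral_eq_integral)
  have pointwise: "e\<^sup>2 \<le> (T \<omega>)\<^sup>2" if \<omega>: "\<omega> \<in> {\<alpha> + c * t..\<beta> + c * t}" for \<omega>
  proof -
    have "per_ext L (indicat_real {\<alpha>..\<beta>}) (\<omega> - c * t) = 1"
      using \<omega> assms \<open>\<beta> \<le> L\<close> \<open>0 < L\<close> by (subst per_ext_eq) auto
    then have "T \<omega> = exp (- integral {\<omega> - c * t..\<omega>} (per_ext L k) / c)"
      unfolding T_def Tsg_eq[OF \<open>0 < L\<close>] by simp
    moreover have "integral {\<omega> - c * t..\<omega>} (per_ext L k) \<le> integral {\<alpha>..\<beta> + c * t} (per_ext L k)"
      using \<omega> K_nonneg by (intro integral_subset_le K.integrable) auto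
    moreover have "integral {\<alpha>..\<beta> + c * t} (per_ext L k) = integral {\<alpha>..\<beta> + c * t} k"
      using assms \<open>0 < L\<close> by (intro integral_per_ext) auto
    ultimately have "e \<le> T \<omega>"
      unfolding e_def using \<open>0 < c\<close> by (simp add: divide_right_mono)
    then show ?thesis
      unfolding e_def by (intro power_mono) auto
  qed
  have sub: "{\<alpha> + c * t..\<beta> + c * t} \<subseteq> {0..L}"
    using assms by (auto intro: add_nonneg_nonneg)
  have "(\<beta> - \<alpha>) * e\<^sup>2 = integral {\<alpha> + c * t..\<beta> + c * t} (\<lambda>_. e\<^sup>2)"
    using assms by simp
  also have "\<dots> \<le> integral {\<alpha> + c * t..\<beta> + c * t} (\<lambda>\<omega>. (T \<omega>)\<^sup>2)"
    using pointwise by (intro integral_le integrable_subinterval_real[OF T2(1) sub]) auto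
  also have "\<dots> \<le> integral {0..L} (\<lambda>\<omega>. (T \<omega>)\<^sup>2)"
    using sub by (intro integral_subset_le integrable_subinterval_real[OF T2(1) sub] T2(1)) auto
  finally have "sqrt ((\<beta> - \<alpha>) * e\<^sup>2) \<le> L2_norm_on L T"
    unfolding L2_norm_on_def T2(2) by simp
  then show ?thesis
    unfolding T_def e_def using assms by (simp add: real_sqrt_mult)
qed

section \<open>The damping intervals\<close>

locale damping_intervals =
  fixes a b kk :: "nat \<Rightarrow> real"
  assumes a1: "a 1 = 0"
    and ab: "\<And>j. j \<ge> 1 \<Longrightarrow> a j < b j"
    and ba: "\<And>j. j \<ge> 1 \<Longrightarrow> b j \<le> a (Suc j)"
    and a_unbounded: "\<not> bdd_above {a j | j. j \<ge> 1}"
    and kk_pos: "\<And>j. j \<ge> 1 \<Longrightarrow> kk j > 0"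
begin

lemma a_less: "1 \<le> i \<Longrightarrow> i < j \<Longrightarrow> a i < a j"
proof (induction j)
  case (Suc j)
  have "a j < a (Suc j)"
    using ab ba Suc.prems by (meson order_less_le_trans le_trans less_Suc_eq_le)
  with Suc show ?case
    by (cases "i = j") auto
qed simp

lemma a_le: "1 \<le> i \<Longrightarrow> i \<le> j \<Longrightarrow> a i \<le> a j"
  using a_less[of i j] by (cases "i = j") auto

lemma b_le_a: "1 \<le> i \<Longrightarrow> i < j \<Longrightarrow> b i \<le> a j"
  using ba[of i] a_le[of "Suc i" j] by simp

lemma b_le: "1 \<le> i \<Longrightarrow> i \<le> j \<Longrightarrow> b i \<le> b j"
  using b_le_a[of i j] ab[of j] by (cases "i = j") auto

lemma a_nonneg: "j \<ge> 1 \<Longrightarrow> a j \<ge> 0"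
  using a_le[of 1 j] a1 by simp

lemma b1_pos: "b 1 > 0"
  using ab[of 1] a1 by simp

lemma ex_a_gt: "\<exists>j\<ge>1. T < a j"
  using a_unbounded unfolding bdd_above_def by (auto simp: not_le)

lemma ex_cell: "0 \<le> t \<Longrightarrow> \<exists>n\<ge>1. a n \<le> t \<and> t < a (Suc n)"
proof -
  assume "0 \<le> t"
  define J where "J = (LEAST j. 1 \<le> j \<and> t < a j)"
  have J: "1 \<le> J \<and> t < a J"
    unfolding J_def using ex_a_gt[of t] by (rule LeastI_ex)
  then have "J \<ge> 2"
    using a1 \<open>0 \<le> t\<close> by (cases "J = 1") auto
  moreover have "\<not> (1 \<le> J - 1 \<and> t < a (J - 1))"
  proof
    assume "1 \<le> J - 1 \<and> t < a (J - 1)"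
    then have "J \<le> J - 1"
      unfolding J_def by (rule Least_le)
    then show False
      using \<open>J \<ge> 2\<close> by simp
  qed
  ultimately show ?thesis
    using J by (intro exI[of _ "J - 1"]) auto
qed

lemma kB_eq_sum:
  assumes "\<omega> < a (Suc N)"
  shows "kB a b kk \<omega> = (\<Sum>j=1..N. kk j * indicator {a j..b j} \<omega>)"
proof -
  have "kB a b kk \<omega> = (\<Sum>j<N. kk (Suc j) * indicator {a (Suc j)..b (Suc j)} \<omega>)"
    unfolding kB_def
  proof (rule suminf_finite)
    fix j assume "j \<notin> {..<N}"
    then have "a (Suc N) \<le> a (Suc j)"
      using a_le by simp
    then show "kk (Suc j) * indicator {a (Suc j)..b (Suc j)} \<omega> = 0"
      using assms by auto
  qed simp
  also have "\<dots> = (\<Sum>j=1..N. kk j * indicator {a j..b j} \<omega>)"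
    using sum.atLeast1_atMost_eq[of "\<lambda>j. kk j * indicator {a j..b j} \<omega>" N] by simp
  finally show ?thesis .
qed

lemma has_integral_kB:
  assumes "t < a (Suc N)"
  shows "(kB a b kk has_integral (\<Sum>j=1..N. kk j * overlap (a j) (b j) s t)) {s..t}"
proof (rule has_integral_eq[rotated])
  show "((\<lambda>\<omega>. \<Sum>j=1..N. kk j * indicator {a j..b j} \<omega>) has_integral
          (\<Sum>j=1..N. kk j * overlap (a j) (b j) s t)) {s..t}"
    by (intro has_integral_sum has_integral_mult_right has_integral_indicator_overlap) auto
  show "(\<Sum>j=1..N. kk j * indicator {a j..b j} \<omega>) = kB a b kk \<omega>" if "\<omega> \<in> {s..t}" for \<omega>
    using that assms by (intro kB_eq_sum[symmetric]) auto
qed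

lemma kB_integrable: "kB a b kk integrable_on {s..t}"
proof -
  obtain N where "N \<ge> 1" "t < a N"
    using ex_a_gt by blast
  then have "t < a (Suc N)"
    using a_less[of N "Suc N"] by simp
  then show ?thesis
    using has_integral_kB by blast
qed

lemma integral_kB_adjacent:
  "x \<le> y \<Longrightarrow> y \<le> z \<Longrightarrow>
     integral {x..y} (kB a b kk) + integral {y..z} (kB a b kk) = integral {x..z} (kB a b kk)"
  by (intro Henstock_Kurzweil_Integration.integral_combine kB_integrable)

lemma kB_nonneg: "0 \<le> kB a b kk \<omega>"
proof -
  obtain N where "N \<ge> 1" "\<omega> < a N"
    using ex_a_gt by blast
  then have "\<omega> < a (Suc N)"
    using a_less[of N "Suc N"] by simp
  then show ?thesis
    using kk_pos by (auto simp: kB_eq_sum less_imp_le intro!: sum_nonneg)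
qed

lemma integral_kB_inside:
  assumes "1 \<le> j" "a j \<le> x" "x \<le> y" "y \<le> b j"
  shows "integral {x..y} (kB a b kk) = kk j * (y - x)"
proof -
  have "y < a (Suc (Suc j))"
    using assms ab[of "Suc j"] ba[of j] a_less[of "Suc j" "Suc (Suc j)"] by simp
  then have "integral {x..y} (kB a b kk) = (\<Sum>i=1..Suc j. kk i * overlap (a i) (b i) x y)"
    by (rule integral_unique[OF has_integral_kB])
  also have "\<dots> = (\<Sum>i\<in>{j}. kk j * (y - x))"
  proof (rule sum.mono_neutral_cong_right)
    show "\<forall>i\<in>{1..Suc j} - {j}. kk i * overlap (a i) (b i) x y = 0"
    proof
      fix i assume "i \<in> {1..Suc j} - {j}"
      then have "1 \<le> i" and "i < j \<or> i = Suc j"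
        by auto
      then show "kk i * overlap (a i) (b i) x y = 0"
        using assms b_le_a[of i j] ba[of j] unfolding overlap_def by auto
    qed
  qed (use assms in \<open>auto simp: overlap_def\<close>)
  finally show ?thesis
    by simp
qed

lemma integral_kB_across:
  assumes "1 \<le> m" "m < n" "b m \<le> x" "x \<le> a (Suc m)" "b (n - 1) \<le> y" "y \<le> a n"
  shows "integral {x..y} (kB a b kk) = (\<Sum>j\<in>{m+1..n-1}. kk j * (b j - a j))"
proof -
  have "y < a (Suc n)"
    using assms a_less[of n "Suc n"] by simp
  then have "integral {x..y} (kB a b kk) = (\<Sum>j=1..n. kk j * overlap (a j) (b j) x y)"
    by (rule integral_unique[OF has_integral_kB])
  also have "\<dots> = (\<Sum>j\<in>{m+1..n-1}. kk j * (b j - a j))"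
  proof (rule sum.mono_neutral_cong_right)
    show "\<forall>j\<in>{1..n} - {m+1..n-1}. kk j * overlap (a j) (b j) x y = 0"
    proof
      fix j assume "j \<in> {1..n} - {m+1..n-1}"
      then have "1 \<le> j" and "j \<le> m \<or> j = n"
        by auto
      then show "kk j * overlap (a j) (b j) x y = 0"
        using assms b_le[of j m] unfolding overlap_def by auto
    qed
    show "kk j * overlap (a j) (b j) x y = kk j * (b j - a j)" if "j \<in> {m+1..n-1}" for j
      using that assms a_le[of "Suc m" j] b_le[of j "n - 1"] ab[of j]
      unfolding overlap_def by auto
  qed auto
  finally show ?thesis .
qed

definition uniform_damping :: "real \<Rightarrow> real \<Rightarrow> bool" where
  "uniform_damping \<kappa> M \<longleftrightarrow>
     (\<forall>n m. 1 \<le> m \<and> m \<le> n \<longrightarrow> \<kappa> * (a n - b m) - (\<Sum>j\<in>{m+1..n-1}. kk j * (b j - a j)) \<le> M)"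

lemma uniform_dampingD:
  "uniform_damping \<kappa> M \<Longrightarrow> 1 \<le> m \<Longrightarrow> m \<le> n \<Longrightarrow>
     \<kappa> * (a n - b m) - (\<Sum>j\<in>{m+1..n-1}. kk j * (b j - a j)) \<le> M"
  unfolding uniform_damping_def by blast

context
  fixes \<kappa> M :: real
  assumes damping: "uniform_damping \<kappa> M"
    and \<kappa>_nonneg: "0 \<le> \<kappa>" and M_nonneg: "0 \<le> M"
begin

lemma kappa_b1_nonneg: "0 \<le> \<kappa> * b 1"
  using \<kappa>_nonneg b1_pos by simp

lemma gap_bound: "1 \<le> j \<Longrightarrow> \<kappa> * (a (Suc j) - b j) \<le> M"
  using uniform_dampingD[OF damping, of j "Suc j"] by simp

text \<open>A single interval [a j, b j] with k j < \<kappa> sits inside the window from b (j-1) to a (j+1),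
  so its deficit is controlled by the damping condition for (j-1, j+1).\<close>
lemma interval_deficit_bound:
  assumes "1 \<le> j"
  shows "(\<kappa> - kk j) * (b j - a j) \<le> M + \<kappa> * b 1"
proof (cases "j = 1")
  case True
  have "(\<kappa> - kk 1) * (b 1 - a 1) \<le> \<kappa> * (b 1 - a 1)"
    using kk_pos[of 1] ab[of 1] by (intro mult_right_mono) auto
  then show ?thesis
    using True a1 M_nonneg by simp
next
  case False
  then have j2: "2 \<le> j"
    using assms by simp
  have "\<kappa> * (a (j + 1) - b (j - 1)) - (\<Sum>i\<in>{j-1+1..j+1-1}. kk i * (b i - a i)) \<le> M"
    using uniform_dampingD[OF damping, of "j - 1" "j + 1"] j2 by simp
  moreover have "{j-1+1..j+1-1} = {j}"
    using j2 by auto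
  ultimately have window: "\<kappa> * (a (j + 1) - b (j - 1)) - kk j * (b j - a j) \<le> M"
    by simp
  have "b (j - 1) \<le> a j"
    using ba[of "j - 1"] j2 by (simp add: Suc_diff_le)
  then have "\<kappa> * (b j - a j) \<le> \<kappa> * (a (j + 1) - b (j - 1))"
    using ba[of j] j2 \<kappa>_nonneg by (intro mult_left_mono) auto
  then have "(\<kappa> - kk j) * (b j - a j) \<le> M"
    using window by (simp add: algebra_simps)
  then show ?thesis
    using kappa_b1_nonneg by linarith
qed

lemma integral_kB_inside_lower:
  assumes "1 \<le> j" "a j \<le> x" "x \<le> y" "y \<le> b j"
  shows "\<kappa> * (y - x) - (M + \<kappa> * b 1) \<le> integral {x..y} (kB a b kk)"
proof -
  have "(\<kappa> - kk j) * (y - x) \<le> M + \<kappa> * b 1"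
  proof (cases "kk j \<le> \<kappa>")
    case True
    then have "(\<kappa> - kk j) * (y - x) \<le> (\<kappa> - kk j) * (b j - a j)"
      using assms by (intro mult_left_mono) auto
    then show ?thesis
      using interval_deficit_bound[OF assms(1)] by linarith
  next
    case False
    then have "(\<kappa> - kk j) * (y - x) \<le> 0"
      using assms by (intro mult_nonpos_nonneg) auto
    then show ?thesis
      using kappa_b1_nonneg M_nonneg by linarith
  qed
  then show ?thesis
    using integral_kB_inside[OF assms] by (simp add: algebra_simps)
qed

lemma integral_kB_cell_lower:
  assumes "1 \<le> j" "a j \<le> x" "x \<le> y" "y \<le> a (Suc j)"
  shows "\<kappa> * (y - x) - (2 * M + \<kappa> * b 1) \<le> integral {x..y} (kB a b kk)"
proof -
  have gap: "\<kappa> * (v - u) - M \<le> integral {u..v} (kB a b kk)"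
    if "b j \<le> u" "u \<le> v" "v \<le> a (Suc j)" for u v
  proof -
    have "\<kappa> * (v - u) \<le> \<kappa> * (a (Suc j) - b j)"
      using that \<kappa>_nonneg by (intro mult_left_mono) auto
    moreover have "integral {u..v} (kB a b kk) = 0"
      using integral_kB_across[of j "Suc j" u v] assms that by simp
    ultimately show ?thesis
      using gap_bound[OF assms(1)] by linarith
  qed
  consider "y \<le> b j" | "b j \<le> x" | "x < b j" "b j < y"
    by linarith
  then show ?thesis
  proof cases
    case 1
    then show ?thesis
      using integral_kB_inside_lower[of j x y] assms M_nonneg by linarith
  next
    case 2
    then show ?thesis
      using gap[of x y] assms kappa_b1_nonneg M_nonneg by linarith
  next
    case 3
    have "integral {x..b j} (kB a b kk) + integral {b j..y} (kB a b kk) = integral {x..y} (kB a b kk)"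
      using 3 by (intro integral_kB_adjacent) auto
    then show ?thesis
      using integral_kB_inside_lower[of j x "b j"] gap[of "b j" y] assms 3
      by (simp add: algebra_simps)
  qed
qed

lemma integral_kB_to_cell_lower:
  assumes "1 \<le> m" "m < n" "a m \<le> s" "s \<le> a (Suc m)"
  shows "\<kappa> * (a n - s) - (2 * M + \<kappa> * b 1) \<le> integral {s..a n} (kB a b kk)"
proof -
  let ?S = "\<Sum>j\<in>{m+1..n-1}. kk j * (b j - a j)"
  have between: "integral {x..a n} (kB a b kk) = ?S" if "b m \<le> x" "x \<le> a (Suc m)" for x
    using integral_kB_across[OF assms(1,2) that] assms b_le_a[of "n - 1" n] by simp
  have "\<kappa> * (a n - b m) - M \<le> ?S"
    using uniform_dampingD[OF damping, of m n] assms by simp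
  show ?thesis
  proof (cases "s \<le> b m")
    case True
    have "integral {s..b m} (kB a b kk) + integral {b m..a n} (kB a b kk)
        = integral {s..a n} (kB a b kk)"
      using True assms b_le_a[of m n] by (intro integral_kB_adjacent) auto
    then show ?thesis
      using integral_kB_inside_lower[of m s "b m"] between[of "b m"] \<open>\<kappa> * (a n - b m) - M \<le> ?S\<close>
        True assms ba[of m] by (simp add: algebra_simps)
  next
    case False
    then have "\<kappa> * (a n - s) \<le> \<kappa> * (a n - b m)"
      using \<kappa>_nonneg by (intro mult_left_mono) auto
    then show ?thesis
      using between[of s] False assms \<open>\<kappa> * (a n - b m) - M \<le> ?S\<close> kappa_b1_nonneg M_nonneg
      by simp
  qed
qed

lemma integral_kB_lower:
  assumes "0 \<le> s" "s \<le> t"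
  shows "\<kappa> * (t - s) - 2 * (2 * M + \<kappa> * b 1) \<le> integral {s..t} (kB a b kk)"
proof -
  obtain m where m: "1 \<le> m" "a m \<le> s" "s < a (Suc m)"
    using ex_cell assms by blast
  obtain n where n: "1 \<le> n" "a n \<le> t" "t < a (Suc n)"
    using ex_cell[of t] assms by auto
  have "m \<le> n"
  proof (rule ccontr)
    assume "\<not> m \<le> n"
    then have "a (Suc n) \<le> a m"
      using a_le[of "Suc n" m] by simp
    then show False
      using m n assms by simp
  qed
  show ?thesis
  proof (cases "m = n")
    case True
    then show ?thesis
      using integral_kB_cell_lower[of m s t] m n assms kappa_b1_nonneg M_nonneg by simp
  next
    case False
    then have "a (Suc m) \<le> a n"
      using a_le[of "Suc m" n] \<open>m \<le> n\<close> by simp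
    have "integral {s..a n} (kB a b kk) + integral {a n..t} (kB a b kk) = integral {s..t} (kB a b kk)"
      using \<open>a (Suc m) \<le> a n\<close> m n assms by (intro integral_kB_adjacent) auto
    then show ?thesis
      using \<open>a (Suc m) \<le> a n\<close> integral_kB_to_cell_lower[of m n s]
        integral_kB_cell_lower[of n "a n" t] False \<open>m \<le> n\<close> m n
      by (simp add: algebra_simps)
  qed
qed

end

end

section \<open>Uniform exponential stability and the damping condition\<close>

definition uniformly_exp_stable :: "real \<Rightarrow> (real \<Rightarrow> real) \<Rightarrow> real \<Rightarrow> real \<Rightarrow> bool" where
  "uniformly_exp_stable c k M' k' \<longleftrightarrow>
     (\<forall>L>0. \<forall>t\<ge>0. \<forall>x0 \<in> L2_on L.
        Tsg c k L t x0 \<in> L2_on L \<and>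
        L2_norm_on L (Tsg c k L t x0) \<le> M' * exp (- k' * t) * L2_norm_on L x0)"

context damping_intervals
begin

lemma integral_kB_first_interval:
  assumes "0 < L"
  shows "kk 1 * min (b 1) L \<le> integral {0..L} (kB a b kk)"
proof -
  have "integral {0..min (b 1) L} (kB a b kk) = kk 1 * min (b 1) L"
    using integral_kB_inside[of 1 0 "min (b 1) L"] a1 b1_pos assms by simp
  moreover have "integral {0..min (b 1) L} (kB a b kk) \<le> integral {0..L} (kB a b kk)"
    by (intro integral_subset_le kB_integrable) (auto simp: kB_nonneg)
  ultimately show ?thesis
    by simp
qed

lemma integral_kB_linear_lower:
  assumes damping: "uniform_damping \<kappa> M" and "0 < \<kappa>" "0 < M"
  obtains \<kappa>' where "0 < \<kappa>'" "\<kappa>' \<le> \<kappa>" "\<And>L. 0 < L \<Longrightarrow> \<kappa>' * L \<le> integral {0..L} (kB a b kk)"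
proof
  define C where "C = 2 * (2 * M + \<kappa> * b 1)"
  have "0 < C"
    unfolding C_def using assms b1_pos by (simp add: add_pos_nonneg)
  define \<kappa>' where "\<kappa>' = min (\<kappa> / 2) (min (kk 1) (kk 1 * b 1 * \<kappa> / (2 * C)))"
  show "0 < \<kappa>'"
    unfolding \<kappa>'_def using assms \<open>0 < C\<close> kk_pos[of 1] b1_pos by simp
  show "\<kappa>' \<le> \<kappa>"
    unfolding \<kappa>'_def using assms by simp
  fix L :: real assume "0 < L"
  show "\<kappa>' * L \<le> integral {0..L} (kB a b kk)"
  proof (cases "2 * C \<le> \<kappa> * L")
    case True
    have "\<kappa>' * L \<le> \<kappa> / 2 * L"
      unfolding \<kappa>'_def using \<open>0 < L\<close> by (intro mult_right_mono) auto
    moreover have "\<kappa> * L - C \<le> integral {0..L} (kB a b kk)"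
      using integral_kB_lower[OF damping, of 0 L] assms \<open>0 < L\<close> unfolding C_def by simp
    ultimately show ?thesis
      using True by linarith
  next
    case False
    have "\<kappa>' * L \<le> kk 1 * min (b 1) L"
    proof (cases "L \<le> b 1")
      case True
      have "\<kappa>' * L \<le> kk 1 * L"
        unfolding \<kappa>'_def using \<open>0 < L\<close> by (intro mult_right_mono) auto
      then show ?thesis
        using True by simp
    next
      case False
      have "\<kappa>' * L \<le> kk 1 * b 1 * \<kappa> / (2 * C) * L"
        unfolding \<kappa>'_def using \<open>0 < L\<close> by (intro mult_right_mono) auto
      also have "\<dots> = kk 1 * b 1 * (\<kappa> * L / (2 * C))"
        by simp
      also have "\<dots> \<le> kk 1 * b 1"
        using \<open>\<not> 2 * C \<le> \<kappa> * L\<close> \<open>0 < C\<close> \<open>0 < L\<close> assms kk_pos[of 1] b1_pos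
        by (intro mult_right_le_one_le) auto
      finally show ?thesis
        using False by simp
    qed
    then show ?thesis
      using integral_kB_first_interval[OF \<open>0 < L\<close>] by linarith
  qed
qed

lemma uniform_damping_imp_exp_stable:
  assumes "0 < c" and damping: "uniform_damping \<kappa> M" and "0 < \<kappa>" "0 < M"
  shows "\<exists>M' k'. 0 < M' \<and> 0 < k' \<and> uniformly_exp_stable c (kB a b kk) M' k'"
proof -
  define C where "C = 2 * (2 * M + \<kappa> * b 1)"
  have "0 \<le> C"
    unfolding C_def using assms b1_pos by simp
  obtain \<kappa>' where \<kappa>': "0 < \<kappa>'" "\<kappa>' \<le> \<kappa>" "\<And>L. 0 < L \<Longrightarrow> \<kappa>' * L \<le> integral {0..L} (kB a b kk)"
    using integral_kB_linear_lower[OF damping \<open>0 < \<kappa>\<close> \<open>0 < M\<close>] by blast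
  have "uniformly_exp_stable c (kB a b kk) (exp (2 * C / c)) \<kappa>'"
    unfolding uniformly_exp_stable_def
  proof (intro allI impI ballI)
    fix L t :: real and x0 assume "0 < L" "0 \<le> t" "x0 \<in> L2_on L"
    interpret K: integrable_periodic L "per_ext L (kB a b kk)"
      using integrable_periodic_per_ext[OF \<open>0 < L\<close> kB_integrable] .
    have sub_period: "\<kappa>' * (t - s) - C \<le> integral {s..t} (per_ext L (kB a b kk))"
      if "0 \<le> s" "s \<le> t" "t \<le> L" for s t
    proof -
      have "\<kappa>' * (t - s) \<le> \<kappa> * (t - s)"
        using \<kappa>' that by (intro mult_right_mono) auto
      then show ?thesis
        using integral_kB_lower[OF damping _ _ that(1,2)] integral_per_ext[OF \<open>0 < L\<close> that(1,3)]
          \<open>0 < \<kappa>\<close> \<open>0 < M\<close> unfolding C_def by simp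
    qed
    have "\<kappa>' * L \<le> integral {0..L} (per_ext L (kB a b kk))"
      using \<kappa>'(3)[OF \<open>0 < L\<close>] integral_per_ext[OF \<open>0 < L\<close>, of 0 L] by simp
    then have "\<kappa>' * (v - u) - 2 * C \<le> integral {u..v} (per_ext L (kB a b kk))" if "u \<le> v" for u v
      using K.integral_window_lower[OF sub_period _ \<open>0 \<le> C\<close> that] by blast
    then show "Tsg c (kB a b kk) L t x0 \<in> L2_on L \<and>
        L2_norm_on L (Tsg c (kB a b kk) L t x0)
          \<le> exp (2 * C / c) * exp (- \<kappa>' * t) * L2_norm_on L x0"
      using Tsg_upper_bound[OF \<open>0 < c\<close> \<open>0 < L\<close> \<open>0 \<le> t\<close> \<open>x0 \<in> L2_on L\<close> kB_integrable] by blast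
  qed
  then show ?thesis
    using \<kappa>' exp_gt_zero by blast
qed

text \<open>The test function is the indicator of [b m - \<delta>, b m]. In time (a n - b m) / c it is carried
  to [a n - \<delta>, a n], damped by at most the mass of k_B on [b m - \<delta>, a n]; the period a n + 1 is
  long enough that nothing wraps around.\<close>

lemma exp_stable_test_bound:
  assumes "0 < c" "0 < M'" and stable: "uniformly_exp_stable c (kB a b kk) M' k'"
    and "1 \<le> m" "m < n" "0 < \<delta>" "\<delta> < b m - a m"
  shows "k' * (a n - b m) - (kk m * \<delta> + (\<Sum>j\<in>{m+1..n-1}. kk j * (b j - a j))) \<le> c * ln M'"
proof -
  define t where "t = (a n - b m) / c"
  define X where "X = kk m * \<delta> + (\<Sum>j\<in>{m+1..n-1}. kk j * (b j - a j))"
  define L where "L = a n + 1"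
  have "b m \<le> a n" "0 \<le> a m"
    using assms b_le_a a_nonneg by auto
  then have "0 \<le> t" "c * t = a n - b m" "0 < L" "0 < b m - \<delta>"
    unfolding t_def L_def using assms by auto
  have "integral {b m - \<delta>..b m} (kB a b kk) + integral {b m..a n} (kB a b kk)
      = integral {b m - \<delta>..a n} (kB a b kk)"
    using \<open>b m \<le> a n\<close> assms by (intro integral_kB_adjacent) auto
  then have X: "integral {b m - \<delta>..b m + c * t} (kB a b kk) = X"
    using integral_kB_inside[of m "b m - \<delta>" "b m"] integral_kB_across[of m n "b m" "a n"]
      assms ba[of m] b_le_a[of "n - 1" n] \<open>c * t = a n - b m\<close> unfolding X_def by simp
  have "sqrt (b m - (b m - \<delta>)) * exp (- integral {b m - \<delta>..b m + c * t} (kB a b kk) / c)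
      \<le> L2_norm_on L (Tsg c (kB a b kk) L t (indicator {b m - \<delta>..b m}))"
    by (rule Tsg_indicator_lower_bound[OF \<open>0 < c\<close> \<open>0 \<le> t\<close> \<open>0 < b m - \<delta>\<close> _ _
          kB_nonneg kB_integrable])
      (use \<open>0 < \<delta>\<close> \<open>c * t = a n - b m\<close> in \<open>auto simp: L_def\<close>)
  then have "sqrt \<delta> * exp (- X / c)
      \<le> L2_norm_on L (Tsg c (kB a b kk) L t (indicator {b m - \<delta>..b m}))"
    unfolding X by simp
  also have "\<dots> \<le> M' * exp (- k' * t) * sqrt \<delta>"
  proof -
    have "indicat_real {b m - \<delta>..b m} \<in> L2_on L"
      and "L2_norm_on L (indicat_real {b m - \<delta>..b m}) = sqrt \<delta>"
      using indicator_L2_on[of "b m - \<delta>" "b m" L] \<open>0 < b m - \<delta>\<close> \<open>0 < \<delta>\<close> \<open>b m \<le> a n\<close>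
      unfolding L_def by simp_all
    then show ?thesis
      using stable \<open>0 < L\<close> \<open>0 \<le> t\<close> unfolding uniformly_exp_stable_def by metis
  qed
  finally have "exp (- X / c) \<le> M' * exp (- k' * t)"
    using \<open>0 < \<delta>\<close> by (simp add: mult.commute)
  then have "- X / c \<le> ln M' - k' * t"
    using \<open>0 < M'\<close> by (simp add: ln_mult ln_ge_iff[symmetric])
  then have "- X \<le> c * ln M' - k' * (c * t)"
    using \<open>0 < c\<close> by (simp add: field_simps)
  then show ?thesis
    unfolding X_def \<open>c * t = a n - b m\<close> by simp
qed

lemma exp_stable_imp_uniform_damping:
  assumes "0 < c" "0 < M'" "0 < k'" and stable: "uniformly_exp_stable c (kB a b kk) M' k'"
  shows "uniform_damping k' (\<bar>c * ln M'\<bar> + 1)"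
  unfolding uniform_damping_def
proof (intro allI impI)
  fix n m :: nat assume "1 \<le> m \<and> m \<le> n"
  show "k' * (a n - b m) - (\<Sum>j\<in>{m+1..n-1}. kk j * (b j - a j)) \<le> \<bar>c * ln M'\<bar> + 1"
  proof (cases "m = n")
    case True
    then have "k' * (a n - b m) < 0"
      using ab[of m] \<open>0 < k'\<close> \<open>1 \<le> m \<and> m \<le> n\<close> by (simp add: mult_pos_neg)
    then show ?thesis
      using True by (simp add: add_nonneg_pos)
  next
    case False
    define \<delta> where "\<delta> = min ((b m - a m) / 2) (1 / kk m)"
    have "0 < \<delta>" "\<delta> < b m - a m" "kk m * \<delta> \<le> 1"
      unfolding \<delta>_def using ab[of m] kk_pos[of m] \<open>1 \<le> m \<and> m \<le> n\<close>
      by (auto simp: min_def field_simps)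
    then show ?thesis
      using exp_stable_test_bound[OF assms(1,2) stable, of m n \<delta>] False \<open>1 \<le> m \<and> m \<le> n\<close> by simp
  qed
qed

end

theorem mainTheorem9:
  fixes c :: real and a b kk :: "nat \<Rightarrow> real"
  assumes c_pos: "c > 0"
    and a1: "a 1 = 0"
    and ab: "\<And>j. j \<ge> 1 \<Longrightarrow> a j < b j"
    and ba: "\<And>j. j \<ge> 1 \<Longrightarrow> b j \<le> a (Suc j)"
    and a_unbdd: "\<not> bdd_above {a j | j. j \<ge> 1}"
    and kk_pos: "\<And>j. j \<ge> 1 \<Longrightarrow> kk j > 0"
    and kk_bdd: "bdd_above {kk j | j. j \<ge> 1}"
  shows "(\<exists>M' k'. M' > 0 \<and> k' > 0 \<and>
            (\<forall>L>0. \<forall>t\<ge>0. \<forall>x0 \<in> L2_on L.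
               Tsg c (kB a b kk) L t x0 \<in> L2_on L \<and>
               L2_norm_on L (Tsg c (kB a b kk) L t x0) \<le> M' * exp (- k' * t) * L2_norm_on L x0))
     \<longleftrightarrow>
     (\<exists>M \<kappa>. M > 0 \<and> \<kappa> > 0 \<and>
            (\<forall>n m. 1 \<le> m \<and> m \<le> n \<longrightarrow>
               \<kappa> * (a n - b m) - (\<Sum>j\<in>{m+1..n-1}. kk j * (b j - a j)) \<le> M))"
proof -
  interpret damping_intervals a b kk
    using a1 ab ba a_unbdd kk_pos by unfold_locales
  have "(\<exists>M' k'. 0 < M' \<and> 0 < k' \<and> uniformly_exp_stable c (kB a b kk) M' k')
      \<longleftrightarrow> (\<exists>M \<kappa>. 0 < M \<and> 0 < \<kappa> \<and> uniform_damping \<kappa> M)"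
  proof
    assume "\<exists>M' k'. 0 < M' \<and> 0 < k' \<and> uniformly_exp_stable c (kB a b kk) M' k'"
    then show "\<exists>M \<kappa>. 0 < M \<and> 0 < \<kappa> \<and> uniform_damping \<kappa> M"
      using exp_stable_imp_uniform_damping[OF c_pos]
      by (metis abs_ge_zero add_nonneg_pos zero_less_one)
  next
    assume "\<exists>M \<kappa>. 0 < M \<and> 0 < \<kappa> \<and> uniform_damping \<kappa> M"
    then show "\<exists>M' k'. 0 < M' \<and> 0 < k' \<and> uniformly_exp_stable c (kB a b kk) M' k'"
      using uniform_damping_imp_exp_stable[OF c_pos] by blast
  qed
  then show ?thesis
    unfolding uniformly_exp_stable_def uniform_damping_def .
qed

end
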